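(* Let $\phi$ be a reduced Boolean formula in the variables $x_1,\dots,x_n$ defining a set $S \subseteq \{0,1\}^n$, and let $Q \subseteq [0,1]^n$ be any convex set containing $S$. If $Q$ satisfies all inequalities of notch at most $\nu$ that are valid for $S$, then $\phi(Q)$ satisfies all inequalities of notch at most $\nu+1$ that are valid for $S$. Moreover, if $Q$ is a polytope defined by an extended formulation of size $\sigma$, then $\phi(Q)$ is a polytope that can be defined by an extended formulation of size $|\phi|\sigma$.
   Context: Boolean formulas are built from input variables $x_1,\dots,x_n$ using $\wedge$, $\vee$, $\neg$, interpreted as functions $\{0,1\}^n\to\{0,1\}$; $\phi$ defines $S=\{x\in\{0,1\}^n:\phi(x)=1\}$. A formula is reduced if negations apply only to input variables. The size $|\phi|$ is the total number of occurrences of input variables. For a reduced $\phi$ and convex $Q\subseteq[0,1]^n$, $\phi(Q)$ is defined recursively: $x_i$ is replaced by $\{x \in Q : x_i = 1\}$; $\neg x_i$ by $\{x \in Q : x_i = 0\}$; a conjunction by the intersection of the corresponding sets; a disjunction by the convex hull of the union of the corresponding sets. An inequality in standard form is $\sum_{i \in I^+} c_i x_i + \sum_{i\in I^-} c_i(1-x_i) \ge \delta$ where $I^+,I^-$ partition $[n]$, $c \in \mathbb{R}^n_{\ge 0}$, $\delta\ge 0$ (every linear inequality can be written with such $I^\pm$, $c$, and the considered ones have $\delta \ge 0$). Its notch is the smallest number $\nu$ such that $\sum_{j\in J} c_j\ge\delta$ for every $J\subseteq[n]$ with $|J|\ge \nu$. An extended formulation of size $m$ of a polytope $P\subseteq\mathbb{R}^n$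 is a description $P=\{x:\exists y\in\mathbb{R}^d,\ Ay\ge b,\ x=Ty+t\}$ with $A$ having $m$ rows. *)

theory Defs
  imports "HOL-Analysis.Analysis"
begin

datatype 'n rformula =
    Var 'n
  | NegVar 'n
  | Conj "'n rformula" "'n rformula"
  | Disj "'n rformula" "'n rformula"

fun eval_rf :: "'n rformula \<Rightarrow> ('n \<Rightarrow> bool) \<Rightarrow> bool" where
  "eval_rf (Var i) a = a i"
| "eval_rf (NegVar i) a = (\<not> a i)"
| "eval_rf (Conj f g) a = (eval_rf f a \<and> eval_rf g a)"
| "eval_rf (Disj f g) a = (eval_rf f a \<or> eval_rf g a)"

fun rf_size :: "'n rformula \<Rightarrow> nat" where
  "rf_size (Var i) = 1"
| "rf_size (NegVar i) = 1"
| "rf_size (Conj f g) = rf_size f + rf_size g"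
| "rf_size (Disj f g) = rf_size f + rf_size g"

definition defined_set :: "'n::finite rformula \<Rightarrow> (real^'n) set" where
  "defined_set \<phi> = {x. (\<forall>i. x$i = 0 \<or> x$i = 1) \<and> eval_rf \<phi> (\<lambda>i. x$i = 1)}"

definition unit_cube :: "(real^'n::finite) set" where
  "unit_cube = {x. \<forall>i. 0 \<le> x$i \<and> x$i \<le> 1}"

fun rf_apply :: "'n::finite rformula \<Rightarrow> (real^'n) set \<Rightarrow> (real^'n) set" where
  "rf_apply (Var i) Q = {x \<in> Q. x$i = 1}"
| "rf_apply (NegVar i) Q = {x \<in> Q. x$i = 0}"
| "rf_apply (Conj f g) Q = rf_apply f Q \<inter> rf_apply g Q"
| "rf_apply (Disj f g) Q = convex hull (rf_apply f Q \<union> rf_apply g Q)"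

text \<open>An inequality in standard form is given by I+ (I- is its complement),
  a nonnegative coefficient vector c and a right-hand side delta >= 0.\<close>
definition std_form :: "real^'n::finite \<Rightarrow> real \<Rightarrow> bool" where
  "std_form c \<delta> \<longleftrightarrow> (\<forall>i. 0 \<le> c$i) \<and> 0 \<le> \<delta>"

definition std_ineq_holds :: "'n::finite set \<Rightarrow> real^'n \<Rightarrow> real \<Rightarrow> real^'n \<Rightarrow> bool" where
  "std_ineq_holds Ip c \<delta> x \<longleftrightarrow>
     (\<Sum>i\<in>Ip. c$i * x$i) + (\<Sum>i\<in>- Ip. c$i * (1 - x$i)) \<ge> \<delta>"

definition notch :: "real^'n::finite \<Rightarrow> real \<Rightarrow> nat" where
  "notch c \<delta> = (LEAST \<nu>. \<forall>J::'n set. \<nu> \<le> card J \<longrightarrow> \<delta> \<le> (\<Sum>j\<in>J. c$j))"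

definition sat_valid_notch :: "(real^'n::finite) set \<Rightarrow> nat \<Rightarrow> (real^'n) set \<Rightarrow> bool" where
  "sat_valid_notch S \<nu> Q \<longleftrightarrow>
     (\<forall>Ip c \<delta>. std_form c \<delta> \<and> notch c \<delta> \<le> \<nu> \<and> (\<forall>x\<in>S. std_ineq_holds Ip c \<delta> x)
        \<longrightarrow> (\<forall>x\<in>Q. std_ineq_holds Ip c \<delta> x))"

text \<open>Extended formulation of size m: P = {x. \<exists>y\<in>R^d. Ay \<ge> b, x = Ty + t},
  A an m x d matrix (vectors y in R^d as functions on {..<d}).\<close>
definition ext_form :: "(real^'n::finite) set \<Rightarrow> nat \<Rightarrow> bool" where
  "ext_form P m \<longleftrightarrow>
     (\<exists>(d::nat) (A::nat \<Rightarrow> nat \<Rightarrow> real) (b::nat \<Rightarrow> real) (T::'n \<Rightarrow> nat \<Rightarrow> real) (t::real^'n).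
        P = {x. \<exists>y::nat \<Rightarrow> real.
                  (\<forall>i<m. (\<Sum>j<d. A i j * y j) \<ge> b i) \<and>
                  (\<forall>k. x$k = (\<Sum>j<d. T k j * y j) + t$k)})"

end

theory Submission
  imports Defs
begin

text \<open>Write lit_val Ip x i for the literal value l_i(x), i.e. x_i for i \<in> I+ and 1 - x_i otherwise,
  so that a standard-form inequality reads \<Sum>c_i l_i(x) \<ge> \<delta>. If \<delta> > 0 it fails at the 0/1-point p
  where all l_i vanish, so \<phi> is false at p. Following false subformulas of \<phi> (one false conjunct,
  or both disjuncts, the valid halfspace being convex) reduces the claim to a literal false at p,
  i.e. to the face l_i = 1 of Q. There the inequality is implied by the one obtained by raising c_i
  to \<delta> and flipping l_i, which is again valid for S and has notch at most \<nu>.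

  For the size bound we follow Balas and pass to homogenizations {(\<lambda>x, \<lambda>) | x \<in> P, \<lambda> \<ge> 0}: they
  turn intersections into intersections, convex hulls of unions into Minkowski sums, and fixing a
  coordinate into a linear equation. Linear images of cones given by inequalities and equations are
  closed under these operations with additive numbers of inequalities, and a formulation of a bounded
  Q with two points homogenizes to one of the homogenization of Q. Slicing at \<lambda> = 1 and eliminating
  the equations by substitution yields the extended formulation of \<phi>(Q).\<close>

section \<open>Inequalities of bounded notch\<close>

definition lit_val :: "'n::finite set \<Rightarrow> real^'n \<Rightarrow> 'n \<Rightarrow> real" where
  "lit_val Ip x i = (if i \<in> Ip then x$i else 1 - x$i)"

definition std_lhs :: "'n::finite set \<Rightarrow> real^'n \<Rightarrow> real^'n \<Rightarrow> real" where
  "std_lhs Ip c x = (\<Sum>i\<in>UNIV. c$i * lit_val Ip x i)"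

lemma std_ineq_holds_iff: "std_ineq_holds Ip c \<delta> x \<longleftrightarrow> \<delta> \<le> std_lhs Ip c x"
proof -
  have "std_lhs Ip c x = (\<Sum>i\<in>Ip. c$i * x$i) + (\<Sum>i\<in>- Ip. c$i * (1 - x$i))"
    unfolding std_lhs_def lit_val_def if_distrib by (subst sum.If_cases) auto
  then show ?thesis
    unfolding std_ineq_holds_def by simp
qed

lemma std_lhs_nonneg:
  assumes "std_form c \<delta>" and "x \<in> unit_cube"
  shows "0 \<le> std_lhs Ip c x"
  using assms unfolding std_lhs_def std_form_def unit_cube_def lit_val_def
  by (force intro!: sum_nonneg)

lemma lit_val_convex_comb:
  "u + v = 1 \<Longrightarrow> lit_val Ip (u *\<^sub>R x + v *\<^sub>R y) i = u * lit_val Ip x i + v * lit_val Ip y i"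
  unfolding lit_val_def by (auto simp: algebra_simps)

lemma convex_std_ineq_holds: "convex {x. std_ineq_holds Ip c \<delta> x}"
proof (rule convexI)
  fix x y and u v :: real
  assume "x \<in> {x. std_ineq_holds Ip c \<delta> x}" "y \<in> {x. std_ineq_holds Ip c \<delta> x}"
    and uv: "0 \<le> u" "0 \<le> v" "u + v = 1"
  then have "u * \<delta> + v * \<delta> \<le> u * std_lhs Ip c x + v * std_lhs Ip c y"
    by (auto simp: std_ineq_holds_iff intro: add_mono mult_left_mono)
  also have "\<dots> = std_lhs Ip c (u *\<^sub>R x + v *\<^sub>R y)"
    unfolding std_lhs_def lit_val_convex_comb[OF uv(3)]
    by (simp add: algebra_simps sum.distrib sum_distrib_left)
  finally show "u *\<^sub>R x + v *\<^sub>R y \<in> {x. std_ineq_holds Ip c \<delta> x}"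
    using uv(3) by (simp add: std_ineq_holds_iff flip: distrib_right)
qed

lemma notch_le_cardD:
  fixes c :: "real^'n::finite" and J :: "'n set"
  assumes "notch c \<delta> \<le> card J"
  shows "\<delta> \<le> (\<Sum>j\<in>J. c$j)"
proof -
  have "\<forall>J::'n set. Suc CARD('n) \<le> card J \<longrightarrow> \<delta> \<le> (\<Sum>j\<in>J. c$j)"
    using card_mono[OF finite subset_UNIV] by (metis not_less_eq_eq)
  then show ?thesis
    using LeastI[of "\<lambda>\<nu>. \<forall>J::'n set. \<nu> \<le> card J \<longrightarrow> \<delta> \<le> (\<Sum>j\<in>J. c$j)"] assms
    unfolding notch_def by blast
qed

lemma notch_leI:
  assumes "\<And>J::'n::finite set. k \<le> card J \<Longrightarrow> \<delta> \<le> (\<Sum>j\<in>J. c$j)"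
  shows "notch c \<delta> \<le> k"
  unfolding notch_def by (rule Least_le) (use assms in auto)

lemma notch_raise_coeff:
  assumes "notch c \<delta> \<le> \<nu> + 1" and "\<forall>j. 0 \<le> c$j" and "0 \<le> \<delta>"
  shows "notch (\<chi> j. if j = i then \<delta> else c$j) (\<delta> - c$i) \<le> \<nu>"
proof (rule notch_leI)
  fix J :: "'a set"
  assume J: "\<nu> \<le> card J"
  let ?c' = "\<chi> j. if j = i then \<delta> else c$j"
  show "\<delta> - c$i \<le> (\<Sum>j\<in>J. ?c'$j)"
  proof (cases "i \<in> J")
    case True
    have "(\<Sum>j\<in>J. ?c'$j) = \<delta> + (\<Sum>j\<in>J - {i}. ?c'$j)"
      using True by (simp add: sum.remove)
    moreover have "0 \<le> (\<Sum>j\<in>J - {i}. ?c'$j)"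
      using assms(2,3) by (auto intro!: sum_nonneg)
    ultimately show ?thesis
      using assms(2) by (smt (verit))
  next
    case False
    then have "\<delta> \<le> (\<Sum>j\<in>insert i J. c$j)"
      using J assms(1) by (intro notch_le_cardD) (simp add: card_insert_if)
    also have "\<dots> = c$i + (\<Sum>j\<in>J. ?c'$j)"
      using False by (auto intro!: sum.cong)
    finally show ?thesis by simp
  qed
qed

definition flip :: "'a set \<Rightarrow> 'a \<Rightarrow> 'a set" where
  "flip I i = (if i \<in> I then I - {i} else insert i I)"

lemma std_lhs_flip:
  "std_lhs (flip Ip i) (\<chi> j. if j = i then d else c$j) x
     = std_lhs Ip c x - c$i * lit_val Ip x i + d * (1 - lit_val Ip x i)"
proof -
  have "std_lhs (flip Ip i) (\<chi> j. if j = i then d else c$j) x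
      = d * (1 - lit_val Ip x i) + (\<Sum>j\<in>UNIV - {i}. c$j * lit_val Ip x j)"
    unfolding std_lhs_def
    by (subst sum.remove[of _ i], simp, simp)
       (auto simp: lit_val_def flip_def intro!: sum.cong)
  moreover have "std_lhs Ip c x = c$i * lit_val Ip x i + (\<Sum>j\<in>UNIV - {i}. c$j * lit_val Ip x j)"
    unfolding std_lhs_def by (simp add: sum.remove)
  ultimately show ?thesis by simp
qed

lemma std_ineq_holds_on_literal_face:
  fixes Q S :: "(real^'n::finite) set"
  assumes std: "std_form c \<delta>" and nt: "notch c \<delta> \<le> \<nu> + 1"
    and valid: "\<forall>s\<in>S. std_ineq_holds Ip c \<delta> s"
    and S01: "\<forall>s\<in>S. \<forall>j. s$j = 0 \<or> s$j = 1"
    and sat: "sat_valid_notch S \<nu> Q" and cube: "Q \<subseteq> unit_cube"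
    and x: "x \<in> Q" "lit_val Ip x i = 1"
  shows "std_ineq_holds Ip c \<delta> x"
proof (cases "\<delta> \<le> c$i")
  case True
  have "0 \<le> (\<Sum>j\<in>UNIV - {i}. c$j * lit_val Ip x j)"
    using std x cube unfolding std_form_def unit_cube_def lit_val_def
    by (force intro!: sum_nonneg)
  then show ?thesis
    using True x(2) unfolding std_ineq_holds_iff std_lhs_def by (simp add: sum.remove[of _ i])
next
  case False
  let ?c' = "\<chi> j. if j = i then \<delta> else c$j"
  have c0: "\<forall>j. 0 \<le> c$j" "0 \<le> \<delta>"
    using std unfolding std_form_def by auto
  have "std_form ?c' (\<delta> - c$i)"
    using c0 False unfolding std_form_def by auto
  moreover have "notch ?c' (\<delta> - c$i) \<le> \<nu>"
    using notch_raise_coeff[OF nt c0] .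
  moreover have "\<forall>s\<in>S. std_ineq_holds (flip Ip i) ?c' (\<delta> - c$i) s"
  proof
    fix s assume s: "s \<in> S"
    then have "lit_val Ip s i = 0 \<or> lit_val Ip s i = 1"
      using S01 unfolding lit_val_def by force
    moreover have "\<delta> \<le> std_lhs Ip c s" "0 \<le> c$i" "0 \<le> \<delta>"
      using valid s c0 unfolding std_ineq_holds_iff by auto
    ultimately show "std_ineq_holds (flip Ip i) ?c' (\<delta> - c$i) s"
      unfolding std_ineq_holds_iff std_lhs_flip by auto
  qed
  ultimately have "std_ineq_holds (flip Ip i) ?c' (\<delta> - c$i) x"
    using sat x(1) unfolding sat_valid_notch_def by blast
  then show ?thesis
    using x(2) unfolding std_ineq_holds_iff std_lhs_flip by simp
qed

lemma std_ineq_holds_if_formula_false: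
  fixes Q S :: "(real^'n::finite) set"
  assumes "std_form c \<delta>" and "notch c \<delta> \<le> \<nu> + 1"
    and "\<forall>s\<in>S. std_ineq_holds Ip c \<delta> s" and "\<forall>s\<in>S. \<forall>j. s$j = 0 \<or> s$j = 1"
    and "sat_valid_notch S \<nu> Q" and "Q \<subseteq> unit_cube"
  shows "\<not> eval_rf \<psi> (\<lambda>j. j \<notin> Ip) \<Longrightarrow> x \<in> rf_apply \<psi> Q \<Longrightarrow> std_ineq_holds Ip c \<delta> x"
proof (induction \<psi> arbitrary: x)
  case (Var i)
  then show ?case
    using std_ineq_holds_on_literal_face[OF assms, of x i] by (auto simp: lit_val_def)
next
  case (NegVar i)
  then show ?case
    using std_ineq_holds_on_literal_face[OF assms, of x i] by (auto simp: lit_val_def)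
next
  case (Conj f g)
  then show ?case by auto
next
  case (Disj f g)
  have "convex hull (rf_apply f Q \<union> rf_apply g Q) \<subseteq> {x. std_ineq_holds Ip c \<delta> x}"
    using Disj by (intro hull_minimal convex_std_ineq_holds) auto
  then show ?case
    using Disj by auto
qed

lemma rf_apply_subset:
  assumes "convex Q"
  shows "rf_apply \<psi> Q \<subseteq> Q"
proof (induction \<psi>)
  case (Disj f g)
  then show ?case
    using assms by (simp add: hull_minimal)
qed auto

lemma sat_valid_notch_rf_apply:
  fixes \<phi> :: "'n::finite rformula"
  assumes "convex Q" and cube: "Q \<subseteq> unit_cube"
    and sat: "sat_valid_notch (defined_set \<phi>) \<nu> Q"
  shows "sat_valid_notch (defined_set \<phi>) (\<nu> + 1) (rf_apply \<phi> Q)"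
  unfolding sat_valid_notch_def
proof (intro allI impI ballI, elim conjE)
  fix Ip c \<delta> x
  assume std: "std_form c \<delta>" and nt: "notch c \<delta> \<le> \<nu> + 1"
    and valid: "\<forall>s\<in>defined_set \<phi>. std_ineq_holds Ip c \<delta> s" and x: "x \<in> rf_apply \<phi> Q"
  have S01: "\<forall>s\<in>defined_set \<phi>. \<forall>j. s$j = 0 \<or> s$j = 1"
    unfolding defined_set_def by auto
  show "std_ineq_holds Ip c \<delta> x"
  proof (cases "\<delta> = 0")
    case True
    then show ?thesis
      using std_lhs_nonneg[OF std] x rf_apply_subset[OF assms(1)] cube
      unfolding std_ineq_holds_iff by blast
  next
    case False
    define p :: "real^'n" where "p = (\<chi> j. if j \<in> Ip then 0 else 1)"
    have "std_lhs Ip c p = 0"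
      unfolding std_lhs_def lit_val_def p_def by (intro sum.neutral) auto
    then have "p \<notin> defined_set \<phi>"
      using valid False std unfolding std_ineq_holds_iff std_form_def by force
    moreover have "\<forall>j. p$j = 0 \<or> p$j = 1" and "(\<lambda>j. p$j = 1) = (\<lambda>j. j \<notin> Ip)"
      unfolding p_def by auto
    ultimately have "\<not> eval_rf \<phi> (\<lambda>j. j \<notin> Ip)"
      unfolding defined_set_def by auto
    then show ?thesis
      using std_ineq_holds_if_formula_false[OF std nt valid S01 sat cube] x by blast
  qed
qed

section \<open>Convexity and polytopality of \<phi>(Q)\<close>

lemma convex_rf_apply:
  fixes Q :: "(real^'n::finite) set"
  assumes "convex Q"
  shows "convex (rf_apply \<psi> Q)"
proof (induction \<psi>)
  case (Var i)
  have "rf_apply (Var i) Q = Q \<inter> {x. axis i 1 \<bullet> x = 1}" by (auto simp: inner_axis')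
  then show ?case
    using assms convex_hyperplane by (metis convex_Int)
next
  case (NegVar i)
  have "rf_apply (NegVar i) Q = Q \<inter> {x. axis i 1 \<bullet> x = 0}" by (auto simp: inner_axis')
  then show ?case
    using assms convex_hyperplane by (metis convex_Int)
qed (auto intro: convex_Int)

lemma polytope_rf_apply:
  fixes Q :: "(real^'n::finite) set"
  assumes "polytope Q"
  shows "polytope (rf_apply \<psi> Q)"
proof (induction \<psi>)
  case (Var i)
  have "rf_apply (Var i) Q = Q \<inter> {x. axis i 1 \<bullet> x = 1}" by (auto simp: inner_axis')
  then show ?case
    using polytope_Int_polyhedron[OF assms polyhedron_hyperplane] by simp
next
  case (NegVar i)
  have "rf_apply (NegVar i) Q = Q \<inter> {x. axis i 1 \<bullet> x = 0}" by (auto simp: inner_axis')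
  then show ?case
    using polytope_Int_polyhedron[OF assms polyhedron_hyperplane] by simp
next
  case (Conj f g)
  then show ?case by (simp add: polytope_Int)
next
  case (Disj f g)
  obtain V W where "finite V" "rf_apply f Q = convex hull V" "finite W" "rf_apply g Q = convex hull W"
    using Disj.IH unfolding polytope_def by blast
  then have "rf_apply (Disj f g) Q = convex hull (V \<union> W)"
    by (simp add: hull_Un[symmetric] convex_Inter)
  then show ?case
    using \<open>finite V\<close> \<open>finite W\<close> by (simp add: polytope_convex_hull)
qed

section \<open>Projected polyhedra with equations\<close>

text \<open>As in ext_form, points of R^D are functions on nat of which only the first D entries matter.\<close>
definition lform :: "nat \<Rightarrow> (nat \<Rightarrow> real) \<Rightarrow> (nat \<Rightarrow> real) \<Rightarrow> real" where
  "lform D a y = (\<Sum>j<D. a j * y j)"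

lemma lform_cong: "(\<And>j. j < D \<Longrightarrow> y j = z j) \<Longrightarrow> lform D a y = lform D a z"
  unfolding lform_def by (rule sum.cong) auto

lemma lform_add_coeffs: "lform D (\<lambda>j. a j + b j) y = lform D a y + lform D b y"
  unfolding lform_def by (simp add: sum.distrib algebra_simps)

lemma lform_diff_coeffs: "lform D (\<lambda>j. a j - b j) y = lform D a y - lform D b y"
  unfolding lform_def by (simp add: sum_subtractf algebra_simps)

lemma lform_scale_coeffs: "lform D (\<lambda>j. c * a j) y = c * lform D a y"
  unfolding lform_def by (simp add: sum_distrib_left algebra_simps)

lemma lform_add_scaled: "lform D a (\<lambda>j. y j + s * r j) = lform D a y + s * lform D a r"
  unfolding lform_def by (simp add: sum.distrib sum_distrib_left algebra_simps)

lemma lform_diff: "lform D a (\<lambda>j. y j - z j) = lform D a y - lform D a z"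
  unfolding lform_def by (simp add: sum_subtractf algebra_simps)

lemma lform_divide: "lform D a (\<lambda>j. y j / l) = lform D a y / l"
  unfolding lform_def by (simp add: sum_divide_distrib)

lemma lform_zero_coeffs: "lform D (\<lambda>j. 0) y = 0"
  unfolding lform_def by simp

lemma lform_zero_vector: "lform D a (\<lambda>j. 0) = 0"
  unfolding lform_def by simp

lemma lform_fun_upd: "j0 < D \<Longrightarrow> lform D a (y(j0 := v)) = lform D a y + a j0 * (v - y j0)"
  unfolding lform_def by (simp add: sum.remove[of _ j0] algebra_simps)

definition aff :: "nat \<Rightarrow> (nat \<Rightarrow> real) \<times> real \<Rightarrow> (nat \<Rightarrow> real) \<Rightarrow> real" where
  "aff D e y = lform D (fst e) y + snd e"

definition proj_polyhedron :: "nat \<Rightarrow> nat \<Rightarrow> (nat \<Rightarrow> (nat \<Rightarrow> real) \<times> real)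
    \<Rightarrow> ((nat \<Rightarrow> real) \<times> real) set \<Rightarrow> ('n \<Rightarrow> (nat \<Rightarrow> real) \<times> real) \<Rightarrow> (real^'n::finite) set" where
  "proj_polyhedron m D P E X =
     {x. \<exists>y. (\<forall>i<m. 0 \<le> aff D (P i) y) \<and> (\<forall>e\<in>E. aff D e y = 0) \<and> (\<forall>k. x$k = aff D (X k) y)}"

lemma ext_form_iff_proj_polyhedron:
  "ext_form Q m \<longleftrightarrow> (\<exists>D P X. Q = proj_polyhedron m D P {} X)"
proof
  assume "ext_form Q m"
  then obtain D A b T t where "Q = {x. \<exists>y. (\<forall>i<m. b i \<le> (\<Sum>j<(D::nat). A i j * y j)) \<and>
      (\<forall>k. x$k = (\<Sum>j<D. T k j * y j) + t$k)}"
    unfolding ext_form_def by blast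
  then have "Q = proj_polyhedron m D (\<lambda>i. (A i, - b i)) {} (\<lambda>k. (T k, t$k))"
    unfolding proj_polyhedron_def aff_def lform_def by (auto simp: algebra_simps)
  then show "\<exists>D P X. Q = proj_polyhedron m D P {} X" by blast
next
  assume "\<exists>D P X. Q = proj_polyhedron m D P {} X"
  then obtain D P X where "Q = proj_polyhedron m D P {} X" by blast
  moreover have le: "0 \<le> a + c \<longleftrightarrow> - c \<le> a" for a c :: real by linarith
  ultimately have Q: "Q = {x. \<exists>y. (\<forall>i<m. - snd (P i) \<le> (\<Sum>j<D. fst (P i) j * y j)) \<and>
      (\<forall>k. x$k = (\<Sum>j<D. fst (X k) j * y j) + (\<chi> k. snd (X k))$k)}"
    unfolding proj_polyhedron_def aff_def le lform_def by simp
  show "ext_form Q m"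
    unfolding ext_form_def Q
    by (intro exI[where x = D] exI[where x = "\<lambda>i. fst (P i)"] exI[where x = "\<lambda>i. - snd (P i)"]
        exI[where x = "\<lambda>k. fst (X k)"] exI[where x = "\<chi> k. snd (X k)"]) simp
qed

lemma mem_proj_polyhedronI:
  "\<forall>i<m. 0 \<le> aff D (P i) y \<Longrightarrow> \<forall>e\<in>E. aff D e y = 0 \<Longrightarrow> (\<chi> k. aff D (X k) y) \<in> proj_polyhedron m D P E X"
  unfolding proj_polyhedron_def by auto

definition eliminate :: "nat \<Rightarrow> (nat \<Rightarrow> real) \<times> real \<Rightarrow> (nat \<Rightarrow> real) \<times> real \<Rightarrow> (nat \<Rightarrow> real) \<times> real" where
  "eliminate j0 e0 e =
     (let r = fst e j0 / fst e0 j0 in ((\<lambda>j. fst e j - r * fst e0 j), snd e - r * snd e0))"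

lemma aff_eliminate: "aff D (eliminate j0 e0 e) y = aff D e y - fst e j0 / fst e0 j0 * aff D e0 y"
proof -
  let ?r = "fst e j0 / fst e0 j0"
  have "lform D (\<lambda>j. fst e j - ?r * fst e0 j) y = lform D (fst e) y - ?r * lform D (fst e0) y"
    by (simp only: lform_diff_coeffs lform_scale_coeffs)
  then show ?thesis
    unfolding eliminate_def aff_def Let_def fst_conv snd_conv by (simp add: algebra_simps)
qed

lemma aff_fun_upd: "j0 < D \<Longrightarrow> aff D e (y(j0 := v)) = aff D e y + fst e j0 * (v - y j0)"
  unfolding aff_def by (simp add: lform_fun_upd)

lemma proj_polyhedron_eliminate:
  assumes "j0 < D" and pivot: "fst e0 j0 \<noteq> 0"
  shows "proj_polyhedron m D P (insert e0 E) X =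
    proj_polyhedron m D (eliminate j0 e0 \<circ> P) (eliminate j0 e0 ` E) (eliminate j0 e0 \<circ> X)"
    (is "?L = ?R")
proof -
  let ?g = "eliminate j0 e0"
  have same: "aff D (?g e) y = aff D e y" if "aff D e0 y = 0" for e y
    using that by (simp add: aff_eliminate)
  show ?thesis
  proof
    show "?L \<subseteq> ?R"
    proof
      fix x assume "x \<in> ?L"
      then obtain y where y: "\<forall>i<m. 0 \<le> aff D (P i) y" "aff D e0 y = 0" "\<forall>e\<in>E. aff D e y = 0"
          "\<forall>k. x$k = aff D (X k) y"
        unfolding proj_polyhedron_def by auto
      with same[OF y(2)] show "x \<in> ?R"
        unfolding proj_polyhedron_def by (intro CollectI exI[of _ y]) simp
    qed
  next
    show "?R \<subseteq> ?L"
    proof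
      fix x assume "x \<in> ?R"
      then obtain y where y: "\<forall>i<m. 0 \<le> aff D (?g (P i)) y" "\<forall>e\<in>E. aff D (?g e) y = 0"
          "\<forall>k. x$k = aff D (?g (X k)) y"
        unfolding proj_polyhedron_def by auto
      define y' where "y' = y(j0 := y j0 - aff D e0 y / fst e0 j0)"
      have e0: "aff D e0 y' = 0"
        using pivot unfolding y'_def by (simp add: aff_fun_upd[OF assms(1)])
      have y': "aff D e y' = aff D (?g e) y" for e
      proof -
        have "fst (?g e) j0 = 0"
          using pivot by (simp add: eliminate_def Let_def)
        then show ?thesis
          using same[OF e0, of e] unfolding y'_def by (simp add: aff_fun_upd[OF assms(1)])
      qed
      have "\<forall>i<m. 0 \<le> aff D (P i) y'" "\<forall>e\<in>E. aff D e y' = 0" "\<forall>k. x$k = aff D (X k) y'"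
        using y y' by simp_all
      with e0 show "x \<in> ?L"
        unfolding proj_polyhedron_def by blast
    qed
  qed
qed

lemma proj_polyhedron_infeasible: "1 \<le> m \<Longrightarrow> proj_polyhedron m D (\<lambda>i. (\<lambda>j. 0, -1)) E X = {}"
  unfolding proj_polyhedron_def aff_def lform_def by (auto simp: Suc_le_eq)

lemma proj_polyhedron_reduce:
  assumes "1 \<le> m" and "finite E" and "e0 \<in> E"
  obtains P' E' X' where "finite E'" "card E' < card E"
    "proj_polyhedron m D P E X = proj_polyhedron m D P' E' X'"
proof -
  let ?E = "E - {e0}"
  have E: "E = insert e0 ?E" and card: "card ?E < card E"
    using assms(2,3) by (auto intro: card_Diff1_less simp del: card_Diff_insert)
  consider j0 where "j0 < D" "fst e0 j0 \<noteq> 0" | "\<forall>j<D. fst e0 j = 0"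
    by blast
  then show ?thesis
  proof cases
    case (1 j0)
    show ?thesis
    proof (rule that)
      show "finite (eliminate j0 e0 ` ?E)"
        using assms(2) by simp
      show "card (eliminate j0 e0 ` ?E) < card E"
        using card card_image_le[of ?E "eliminate j0 e0"] assms(2) by simp
      show "proj_polyhedron m D P E X = proj_polyhedron m D (eliminate j0 e0 \<circ> P)
          (eliminate j0 e0 ` ?E) (eliminate j0 e0 \<circ> X)"
        using proj_polyhedron_eliminate[OF 1, of m P ?E X] E by simp
    qed
  next
    case 2
    then have const: "aff D e0 y = snd e0" for y
      unfolding aff_def lform_def by simp
    show ?thesis
    proof (cases "snd e0 = 0")
      case True
      then have "proj_polyhedron m D P (insert e0 F) X = proj_polyhedron m D P F X" for F
        unfolding proj_polyhedron_def by (simp add: const)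
      then have "proj_polyhedron m D P E X = proj_polyhedron m D P ?E X"
        using E by metis
      then show ?thesis
        using that card assms(2) by blast
    next
      case False
      have "\<not> (\<forall>e\<in>E. aff D e y = 0)" for y
        using const False assms(3) by metis
      then have "proj_polyhedron m D P E X = {}"
        unfolding proj_polyhedron_def by simp
      moreover note proj_polyhedron_infeasible[OF assms(1), of D "{}" X]
      ultimately have "proj_polyhedron m D P E X = proj_polyhedron m D (\<lambda>i. (\<lambda>j. 0, -1)) {} X"
        by simp
      then show ?thesis
        using that[of "{}"] card by simp
    qed
  qed
qed

lemma ext_form_proj_polyhedron:
  assumes "1 \<le> m" and "finite E"
  shows "ext_form (proj_polyhedron m D P E X) m"
  using assms(2)
proof (induction "card E" arbitrary: E P X rule: less_induct)
  case less
  show ?case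
  proof (cases "E = {}")
    case True
    show ?thesis
      unfolding True ext_form_iff_proj_polyhedron by (intro exI) (rule refl)
  next
    case False
    then obtain e0 where e0: "e0 \<in> E" by blast
    obtain P' E' X' where E': "finite E'" "card E' < card E"
      and eq: "proj_polyhedron m D P E X = proj_polyhedron m D P' E' X'"
      by (rule proj_polyhedron_reduce[OF assms(1) less.prems e0])
    show ?thesis
      unfolding eq using less.hyps[OF E'(2,1)] .
  qed
qed

section \<open>Conic formulations\<close>

definition cone_sol :: "nat \<Rightarrow> nat \<Rightarrow> (nat \<Rightarrow> nat \<Rightarrow> real) \<Rightarrow> (nat \<Rightarrow> real) set \<Rightarrow> (nat \<Rightarrow> real) set" where
  "cone_sol m D A E = {y. (\<forall>i<m. 0 \<le> lform D (A i) y) \<and> (\<forall>a\<in>E. lform D a y = 0)}"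

definition cone_map :: "nat \<Rightarrow> ('n \<Rightarrow> nat \<Rightarrow> real) \<Rightarrow> (nat \<Rightarrow> real) \<Rightarrow> (nat \<Rightarrow> real) \<Rightarrow> (real^'n::finite) \<times> real" where
  "cone_map D X L y = ((\<chi> k. lform D (X k) y), lform D L y)"

text \<open>Only the inequalities are counted: the finitely many equations are eliminated at the end.\<close>
definition cone_form :: "((real^'n::finite) \<times> real) set \<Rightarrow> nat \<Rightarrow> bool" where
  "cone_form K m \<longleftrightarrow> (\<exists>D A E X L. finite E \<and> K = cone_map D X L ` cone_sol m D A E)"

lemma cone_formI: "finite E \<Longrightarrow> K = cone_map D X L ` cone_sol m D A E \<Longrightarrow> cone_form K m"
  unfolding cone_form_def by blast

lemma ext_form_cone_slice:
  assumes "cone_form K m" and "1 \<le> m"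
  shows "ext_form {x. (x, 1) \<in> K} m"
proof -
  obtain D A E X L where "finite E" and K: "K = cone_map D X L ` cone_sol m D A E"
    using assms(1) unfolding cone_form_def by blast
  have "{x. (x, 1) \<in> K} =
      proj_polyhedron m D (\<lambda>i. (A i, 0)) (insert (L, -1) ((\<lambda>a. (a, 0)) ` E)) (\<lambda>k. (X k, 0))"
    unfolding K proj_polyhedron_def cone_sol_def cone_map_def aff_def by (auto simp: vec_eq_iff)
  then show ?thesis
    using ext_form_proj_polyhedron[OF assms(2)] \<open>finite E\<close> by (metis finite_imageI finite_insert)
qed

lemma cone_form_Int_coord_eq:
  assumes "cone_form K m"
  shows "cone_form (K \<inter> {p. fst p $ i = c * snd p}) m"
proof -
  obtain D A E X L where "finite E" and K: "K = cone_map D X L ` cone_sol m D A E"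
    using assms unfolding cone_form_def by blast
  have "K \<inter> {p. fst p $ i = c * snd p} = cone_map D X L ` cone_sol m D A (insert (\<lambda>j. X i j - c * L j) E)"
    unfolding K cone_sol_def cone_map_def by (auto simp: lform_diff_coeffs lform_scale_coeffs)
  then show ?thesis
    using \<open>finite E\<close> by (intro cone_formI) simp_all
qed

definition left_block :: "nat \<Rightarrow> (nat \<Rightarrow> real) \<Rightarrow> nat \<Rightarrow> real" where
  "left_block D1 a = (\<lambda>j. if j < D1 then a j else 0)"

definition right_block :: "nat \<Rightarrow> (nat \<Rightarrow> real) \<Rightarrow> nat \<Rightarrow> real" where
  "right_block D1 a = (\<lambda>j. if D1 \<le> j then a (j - D1) else 0)"

definition shift :: "nat \<Rightarrow> (nat \<Rightarrow> real) \<Rightarrow> nat \<Rightarrow> real" where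
  "shift D1 y = (\<lambda>j. y (j + D1))"

definition join :: "nat \<Rightarrow> (nat \<Rightarrow> real) \<Rightarrow> (nat \<Rightarrow> real) \<Rightarrow> nat \<Rightarrow> real" where
  "join D1 y1 y2 = (\<lambda>j. if j < D1 then y1 j else y2 (j - D1))"

definition stack_rows :: "nat \<Rightarrow> (nat \<Rightarrow> 'a) \<Rightarrow> (nat \<Rightarrow> 'a) \<Rightarrow> nat \<Rightarrow> 'a" where
  "stack_rows m1 A1 A2 = (\<lambda>i. if i < m1 then A1 i else A2 (i - m1))"

lemma sum_lessThan_add: "(\<Sum>j<D1 + D2. f j) = (\<Sum>j<D1. f j) + (\<Sum>j<D2. f (j + D1::nat))"
  by (induction D2) (auto simp: add.commute add.left_commute)

lemma lform_left_block: "lform (D1 + D2) (left_block D1 a) y = lform D1 a y"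
  unfolding lform_def left_block_def sum_lessThan_add by simp

lemma lform_right_block: "lform (D1 + D2) (right_block D1 a) y = lform D2 a (shift D1 y)"
  unfolding lform_def right_block_def sum_lessThan_add shift_def by simp

lemma lform_join: "lform D1 a (join D1 y1 y2) = lform D1 a y1"
  unfolding join_def by (rule lform_cong) simp

lemma shift_join: "shift D1 (join D1 y1 y2) = y2"
  unfolding shift_def join_def by simp

lemma join_shift: "join D1 y (shift D1 y) = y"
  unfolding shift_def join_def by auto

lemma all_less_add_iff:
  fixes m1 m2 :: nat
  shows "(\<forall>i<m1 + m2. P i) \<longleftrightarrow> (\<forall>i<m1. P i) \<and> (\<forall>i<m2. P (m1 + i))"
proof
  assume h: "(\<forall>i<m1. P i) \<and> (\<forall>i<m2. P (m1 + i))"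
  show "\<forall>i<m1 + m2. P i"
  proof (intro allI impI)
    fix i assume "i < m1 + m2"
    then show "P i"
      using h by (cases "i < m1") (auto dest!: spec[of _ "i - m1"])
  qed
qed auto

lemma mem_cone_sol_blocks:
  "y \<in> cone_sol (m1 + m2) (D1 + D2) (stack_rows m1 (left_block D1 \<circ> A1) (right_block D1 \<circ> A2))
         (left_block D1 ` E1 \<union> right_block D1 ` E2 \<union> F)
   \<longleftrightarrow> y \<in> cone_sol m1 D1 A1 E1 \<and> shift D1 y \<in> cone_sol m2 D2 A2 E2 \<and> (\<forall>a\<in>F. lform (D1 + D2) a y = 0)"
proof -
  have ball_image: "(\<forall>a\<in>g ` B. P a) \<longleftrightarrow> (\<forall>b\<in>B. P (g b))" for g :: "(nat \<Rightarrow> real) \<Rightarrow> _" and B P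
    by blast
  show ?thesis
    unfolding cone_sol_def all_less_add_iff ball_Un ball_image
    by (simp add: stack_rows_def lform_left_block lform_right_block) blast
qed

lemma image_cone_sol_blocks:
  "f ` cone_sol (m1 + m2) (D1 + D2) (stack_rows m1 (left_block D1 \<circ> A1) (right_block D1 \<circ> A2))
         (left_block D1 ` E1 \<union> right_block D1 ` E2 \<union> F)
   = (\<lambda>(y1, y2). f (join D1 y1 y2)) ` {(y1, y2). y1 \<in> cone_sol m1 D1 A1 E1 \<and> y2 \<in> cone_sol m2 D2 A2 E2
         \<and> (\<forall>a\<in>F. lform (D1 + D2) a (join D1 y1 y2) = 0)}"
  (is "f ` ?S = ?g ` ?T")
proof (intro set_eqI iffI)
  fix z assume "z \<in> f ` ?S"
  then obtain y where "y \<in> ?S" "z = f y" by (rule imageE)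
  then have "(y, shift D1 y) \<in> ?T" "z = ?g (y, shift D1 y)"
    unfolding mem_cone_sol_blocks by (simp_all add: join_shift)
  then show "z \<in> ?g ` ?T" by (rule rev_image_eqI)
next
  fix z assume "z \<in> ?g ` ?T"
  then obtain y1 y2 where z: "z = f (join D1 y1 y2)" and y: "y1 \<in> cone_sol m1 D1 A1 E1"
      "y2 \<in> cone_sol m2 D2 A2 E2" "\<forall>a\<in>F. lform (D1 + D2) a (join D1 y1 y2) = 0"
    by auto
  have "join D1 y1 y2 \<in> cone_sol m1 D1 A1 E1"
    using y(1) by (simp add: cone_sol_def lform_join)
  with y have "join D1 y1 y2 \<in> ?S"
    unfolding mem_cone_sol_blocks shift_join by simp
  then show "z \<in> f ` ?S"
    unfolding z by (rule imageI)
qed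

lemma cone_form_plus:
  assumes "cone_form K1 m1" and "cone_form K2 m2"
  shows "cone_form (K1 + K2) (m1 + m2)"
proof -
  obtain D1 A1 E1 X1 L1 where E1: "finite E1" and K1: "K1 = cone_map D1 X1 L1 ` cone_sol m1 D1 A1 E1"
    using assms(1) unfolding cone_form_def by blast
  obtain D2 A2 E2 X2 L2 where E2: "finite E2" and K2: "K2 = cone_map D2 X2 L2 ` cone_sol m2 D2 A2 E2"
    using assms(2) unfolding cone_form_def by blast
  define X where "X k = (\<lambda>j. left_block D1 (X1 k) j + right_block D1 (X2 k) j)" for k
  define L where "L = (\<lambda>j. left_block D1 L1 j + right_block D1 L2 j)"
  have split: "cone_map (D1 + D2) X L (join D1 y1 y2) = cone_map D1 X1 L1 y1 + cone_map D2 X2 L2 y2"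
    for y1 y2
    unfolding cone_map_def X_def L_def
    by (simp add: lform_add_coeffs lform_left_block lform_right_block lform_join shift_join vec_eq_iff)
  have "K1 + K2 = (\<lambda>(y1, y2). cone_map D1 X1 L1 y1 + cone_map D2 X2 L2 y2)
      ` (cone_sol m1 D1 A1 E1 \<times> cone_sol m2 D2 A2 E2)"
    unfolding K1 K2 set_plus_image map_prod_surj_on[OF refl refl, symmetric] image_image
    by (simp add: split_def)
  also have "\<dots> = (\<lambda>(y1, y2). cone_map (D1 + D2) X L (join D1 y1 y2)) ` {(y1, y2).
      y1 \<in> cone_sol m1 D1 A1 E1 \<and> y2 \<in> cone_sol m2 D2 A2 E2 \<and> (\<forall>a\<in>{}. lform (D1 + D2) a (join D1 y1 y2) = 0)}"
  proof -
    have "{(y1, y2). y1 \<in> cone_sol m1 D1 A1 E1 \<and> y2 \<in> cone_sol m2 D2 A2 E2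
        \<and> (\<forall>a\<in>{}. lform (D1 + D2) a (join D1 y1 y2) = 0)} = cone_sol m1 D1 A1 E1 \<times> cone_sol m2 D2 A2 E2"
      by auto
    then show ?thesis
      by (simp add: split)
  qed
  also have "\<dots> = cone_map (D1 + D2) X L ` cone_sol (m1 + m2) (D1 + D2)
      (stack_rows m1 (left_block D1 \<circ> A1) (right_block D1 \<circ> A2)) (left_block D1 ` E1 \<union> right_block D1 ` E2 \<union> {})"
    by (rule image_cone_sol_blocks[symmetric])
  finally show ?thesis
    using E1 E2 by (intro cone_formI) simp_all
qed

lemma cone_form_Int:
  assumes "cone_form K1 m1" and "cone_form K2 m2"
  shows "cone_form (K1 \<inter> K2) (m1 + m2)"
proof -
  obtain D1 A1 E1 X1 L1 where E1: "finite E1" and K1: "K1 = cone_map D1 X1 L1 ` cone_sol m1 D1 A1 E1"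
    using assms(1) unfolding cone_form_def by blast
  obtain D2 A2 E2 X2 L2 where E2: "finite E2" and K2: "K2 = cone_map D2 X2 L2 ` cone_sol m2 D2 A2 E2"
    using assms(2) unfolding cone_form_def by blast
  define F where "F = range (\<lambda>k j. left_block D1 (X1 k) j - right_block D1 (X2 k) j)
      \<union> {\<lambda>j. left_block D1 L1 j - right_block D1 L2 j}"
  have F: "(\<forall>a\<in>F. lform (D1 + D2) a (join D1 y1 y2) = 0) \<longleftrightarrow> cone_map D1 X1 L1 y1 = cone_map D2 X2 L2 y2"
    for y1 y2
    unfolding F_def cone_map_def
    by (auto simp: lform_diff_coeffs lform_left_block lform_right_block lform_join shift_join vec_eq_iff)
  have first: "cone_map (D1 + D2) (\<lambda>k. left_block D1 (X1 k)) (left_block D1 L1) (join D1 y1 y2)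
      = cone_map D1 X1 L1 y1" for y1 y2
    unfolding cone_map_def by (simp add: lform_left_block lform_join)
  have "K1 \<inter> K2 = (\<lambda>(y1, y2). cone_map (D1 + D2) (\<lambda>k. left_block D1 (X1 k)) (left_block D1 L1) (join D1 y1 y2))
      ` {(y1, y2). y1 \<in> cone_sol m1 D1 A1 E1 \<and> y2 \<in> cone_sol m2 D2 A2 E2
          \<and> (\<forall>a\<in>F. lform (D1 + D2) a (join D1 y1 y2) = 0)}"
    unfolding F first K1 K2 by force
  also have "\<dots> = cone_map (D1 + D2) (\<lambda>k. left_block D1 (X1 k)) (left_block D1 L1) ` cone_sol (m1 + m2) (D1 + D2)
      (stack_rows m1 (left_block D1 \<circ> A1) (right_block D1 \<circ> A2)) (left_block D1 ` E1 \<union> right_block D1 ` E2 \<union> F)"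
    by (rule image_cone_sol_blocks[symmetric])
  finally show ?thesis
    using E1 E2 by (intro cone_formI) (simp_all add: F_def)
qed

section \<open>Homogenization\<close>

definition homogenization :: "'a::real_vector set \<Rightarrow> ('a \<times> real) set" where
  "homogenization Q = insert 0 {(l *\<^sub>R q, l) | l q. 0 < l \<and> q \<in> Q}"

lemma zero_mem_homogenization: "0 \<in> homogenization Q"
  unfolding homogenization_def by simp

lemma scaled_mem_homogenization: "0 \<le> l \<Longrightarrow> q \<in> Q \<Longrightarrow> (l *\<^sub>R q, l) \<in> homogenization Q"
  unfolding homogenization_def by (cases "l = 0") (auto simp: zero_prod_def)

lemma homogenization_mono: "Q \<subseteq> R \<Longrightarrow> homogenization Q \<subseteq> homogenization R"
  unfolding homogenization_def by blast

lemma homogenization_slice: "{x. (x, 1) \<in> homogenization Q} = Q"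
  unfolding homogenization_def by (auto simp: zero_prod_def)

lemma homogenization_Int: "homogenization (Q \<inter> R) = homogenization Q \<inter> homogenization R"
proof
  show "homogenization (Q \<inter> R) \<subseteq> homogenization Q \<inter> homogenization R"
    by (simp add: homogenization_mono)
  show "homogenization Q \<inter> homogenization R \<subseteq> homogenization (Q \<inter> R)"
  proof
    fix p assume p: "p \<in> homogenization Q \<inter> homogenization R"
    show "p \<in> homogenization (Q \<inter> R)"
    proof (cases "p = 0")
      case False
      then obtain l q where "p = (l *\<^sub>R q, l)" "0 < l" "q \<in> Q" "q \<in> R"
        using p unfolding homogenization_def by auto
      then show ?thesis
        by (simp add: scaled_mem_homogenization)
    qed (simp add: zero_mem_homogenization)
  qed
qed

lemma homogenization_coord_eq:
  "homogenization {x \<in> Q. x$i = c} = homogenization Q \<inter> {p. fst p $ i = c * snd p}"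
  unfolding homogenization_def by auto

lemma homogenization_subset_plus:
  "homogenization F \<subseteq> homogenization F + homogenization G"
  "homogenization G \<subseteq> homogenization F + homogenization G"
proof -
  show "homogenization F \<subseteq> homogenization F + homogenization G"
  proof
    fix p assume "p \<in> homogenization F"
    then have "p + 0 \<in> homogenization F + homogenization G"
      by (rule set_plus_intro[OF _ zero_mem_homogenization])
    then show "p \<in> homogenization F + homogenization G" by simp
  qed
  show "homogenization G \<subseteq> homogenization F + homogenization G"
  proof
    fix p assume "p \<in> homogenization G"
    then have "0 + p \<in> homogenization F + homogenization G"
      by (rule set_plus_intro[OF zero_mem_homogenization])
    then show "p \<in> homogenization F + homogenization G" by simp
  qed
qed

lemma homogenization_convex_hull_Un_subset:
  fixes F G :: "'a::euclidean_space set"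
  assumes "convex F" and "convex G"
  shows "homogenization (convex hull (F \<union> G)) \<subseteq> homogenization F + homogenization G"
proof
  fix p assume "p \<in> homogenization (convex hull (F \<union> G))"
  then consider (origin) "p = 0"
    | (scaled) l q where "p = (l *\<^sub>R q, l)" "0 < l" "q \<in> convex hull (F \<union> G)"
    unfolding homogenization_def by blast
  then show "p \<in> homogenization F + homogenization G"
  proof cases
    case origin
    then show ?thesis
      using homogenization_subset_plus zero_mem_homogenization by blast
  next
    case (scaled l q)
    consider "F = {}" | "G = {}" | "F \<noteq> {}" "G \<noteq> {}" by blast
    then show ?thesis
    proof cases
      case 1
      then have "p \<in> homogenization G"
        using scaled convex_hull_eq[THEN iffD2, OF assms(2)] by (simp add: scaled_mem_homogenization)
      then show ?thesis
        using homogenization_subset_plus by blast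
    next
      case 2
      then have "p \<in> homogenization F"
        using scaled convex_hull_eq[THEN iffD2, OF assms(1)] by (simp add: scaled_mem_homogenization)
      then show ?thesis
        using homogenization_subset_plus by blast
    next
      case 3
      obtain u v s t where uv: "0 \<le> u" "0 \<le> v" "u + v = 1" "s \<in> F" "t \<in> G"
        and q: "q = u *\<^sub>R s + v *\<^sub>R t"
        using scaled(3) unfolding convex_hull_union_two[OF assms(1) 3(1) assms(2) 3(2)] by blast
      have p: "p = ((l * u) *\<^sub>R s, l * u) + ((l * v) *\<^sub>R t, l * v)"
        using scaled(1) uv(3) unfolding q by (simp add: scaleR_add_right flip: distrib_left)
      have "((l * u) *\<^sub>R s, l * u) \<in> homogenization F" "((l * v) *\<^sub>R t, l * v) \<in> homogenization G"
        using uv scaled(2) by (simp_all add: scaled_mem_homogenization)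
      then show ?thesis
        unfolding p by (rule set_plus_intro)
    qed
  qed
qed

lemma plus_homogenization_subset:
  "homogenization F + homogenization G \<subseteq> homogenization (convex hull (F \<union> G))"
proof
  have sub: "homogenization F \<subseteq> homogenization (convex hull (F \<union> G))"
    "homogenization G \<subseteq> homogenization (convex hull (F \<union> G))"
    by (auto intro!: homogenization_mono hull_inc)
  fix p assume "p \<in> homogenization F + homogenization G"
  then obtain a b where p: "p = a + b" and a: "a \<in> homogenization F" and b: "b \<in> homogenization G"
    by (auto elim: set_plus_elim)
  show "p \<in> homogenization (convex hull (F \<union> G))"
  proof (cases "a = 0 \<or> b = 0")
    case True
    then show ?thesis
      using a b sub p by auto
  next
    case False
    then obtain l1 s l2 t where a: "a = (l1 *\<^sub>R s, l1)" "0 < l1" "s \<in> F"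
      and b: "b = (l2 *\<^sub>R t, l2)" "0 < l2" "t \<in> G"
      using a b unfolding homogenization_def by blast
    have "(l1 / (l1 + l2)) *\<^sub>R s + (l2 / (l1 + l2)) *\<^sub>R t \<in> convex hull (F \<union> G)"
      using a b by (intro convexD[OF convex_convex_hull] hull_inc)
        (auto simp: add_divide_distrib[symmetric])
    moreover have "p = ((l1 + l2) *\<^sub>R ((l1 / (l1 + l2)) *\<^sub>R s + (l2 / (l1 + l2)) *\<^sub>R t), l1 + l2)"
      using a b unfolding p by (simp add: scaleR_add_right)
    ultimately show ?thesis
      using a b by (simp add: scaled_mem_homogenization)
  qed
qed

lemma homogenization_convex_hull_Un:
  fixes F G :: "'a::euclidean_space set"
  assumes "convex F" and "convex G"
  shows "homogenization (convex hull (F \<union> G)) = homogenization F + homogenization G"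
  using homogenization_convex_hull_Un_subset[OF assms] plus_homogenization_subset by (rule equalityI)

text \<open>The homogenizing variable \<lambda> is stored at index D.\<close>
definition homog_coeffs :: "nat \<Rightarrow> (nat \<Rightarrow> real) \<times> real \<Rightarrow> nat \<Rightarrow> real" where
  "homog_coeffs D e = (\<lambda>j. if j < D then fst e j else if j = D then snd e else 0)"

lemma lform_homog_coeffs: "lform (Suc D) (homog_coeffs D e) y = lform D (fst e) y + snd e * y D"
  unfolding lform_def homog_coeffs_def by simp

lemma lform_homog_coeffs_dehomog:
  "y D \<noteq> 0 \<Longrightarrow> lform (Suc D) (homog_coeffs D e) y = y D * aff D e (\<lambda>j. y j / y D)"
  unfolding lform_homog_coeffs aff_def lform_divide by (simp add: algebra_simps)

lemma lform_homog_coeffs_lift: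
  "lform (Suc D) (homog_coeffs D e) (\<lambda>j. if j = D then l else l * y j) = l * aff D e y"
proof -
  have "lform D (fst e) (\<lambda>j. if j = D then l else l * y j) = l * lform D (fst e) y"
    unfolding lform_def by (simp add: sum_distrib_left algebra_simps)
  then show ?thesis
    unfolding lform_homog_coeffs aff_def by (simp add: algebra_simps)
qed

lemma bounded_ray_direction_zero:
  fixes a r :: real
  assumes "\<forall>s\<ge>0. 0 \<le> a + s * r \<and> a + s * r \<le> 1"
  shows "r = 0"
proof (rule ccontr)
  assume "r \<noteq> 0"
  have a: "0 \<le> a" "a \<le> 1"
    using assms[rule_format, of 0] by auto
  show False
  proof (cases "0 < r")
    case True
    then show False
      using assms[rule_format, of "2 / r"] a by simp
  next
    case False
    then show False
      using assms[rule_format, of "- 2 / r"] a \<open>r \<noteq> 0\<close> by simp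
  qed
qed

lemma lform_recession_direction_zero:
  assumes bounded: "proj_polyhedron m D P {} X \<subseteq> unit_cube"
    and y0: "\<forall>i<m. 0 \<le> aff D (P i) y0" and r: "\<forall>i<m. 0 \<le> lform D (fst (P i)) r"
  shows "lform D (fst (X k)) r = 0"
proof (rule bounded_ray_direction_zero)
  show "\<forall>s\<ge>0. 0 \<le> aff D (X k) y0 + s * lform D (fst (X k)) r
      \<and> aff D (X k) y0 + s * lform D (fst (X k)) r \<le> 1"
  proof (intro allI impI)
    fix s :: real assume "0 \<le> s"
    have aff_ray: "aff D e (\<lambda>j. y0 j + s * r j) = aff D e y0 + s * lform D (fst e) r" for e
      unfolding aff_def lform_add_scaled by simp
    have "\<forall>i<m. 0 \<le> aff D (P i) (\<lambda>j. y0 j + s * r j)"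
      using y0 r \<open>0 \<le> s\<close> unfolding aff_ray by simp
    then have "(\<chi> k. aff D (X k) (\<lambda>j. y0 j + s * r j)) \<in> unit_cube"
      using bounded mem_proj_polyhedronI by blast
    then show "0 \<le> aff D (X k) y0 + s * lform D (fst (X k)) r
        \<and> aff D (X k) y0 + s * lform D (fst (X k)) r \<le> 1"
      unfolding unit_cube_def aff_ray by simp
  qed
qed

lemma homogenization_proj_polyhedron_subset:
  "homogenization (proj_polyhedron m D P {} X) \<subseteq> cone_map (Suc D) (\<lambda>k. homog_coeffs D (X k))
     (homog_coeffs D (\<lambda>j. 0, 1)) ` cone_sol m (Suc D) (\<lambda>i. homog_coeffs D (P i)) {}"
proof
  fix p assume "p \<in> homogenization (proj_polyhedron m D P {} X)"
  then consider "p = 0" | l q where "p = (l *\<^sub>R q, l)" "0 < l" "q \<in> proj_polyhedron m D P {} X"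
    unfolding homogenization_def by blast
  then show "p \<in> cone_map (Suc D) (\<lambda>k. homog_coeffs D (X k)) (homog_coeffs D (\<lambda>j. 0, 1))
      ` cone_sol m (Suc D) (\<lambda>i. homog_coeffs D (P i)) {}"
  proof cases
    case 1
    then show ?thesis
      by (intro image_eqI[of _ _ "\<lambda>j. 0"])
        (simp_all add: cone_map_def cone_sol_def lform_zero_vector zero_prod_def vec_eq_iff)
  next
    case (2 l q)
    then obtain y where "\<forall>i<m. 0 \<le> aff D (P i) y" "q = (\<chi> k. aff D (X k) y)"
      unfolding proj_polyhedron_def by (auto simp: vec_eq_iff)
    with 2 show ?thesis
      by (intro image_eqI[of _ _ "\<lambda>j. if j = D then l else l * y j"])
        (simp_all add: cone_map_def cone_sol_def lform_homog_coeffs_lift aff_def lform_zero_coeffs vec_eq_iff)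
  qed
qed

text \<open>A homogenized solution with negative last coordinate yields, after rescaling, a point on the
  opposite side of every facet, so every point of the bounded polyhedron has the same image.\<close>
lemma bounded_proj_polyhedron_subsingleton:
  assumes bounded: "proj_polyhedron m D P {} X \<subseteq> unit_cube"
    and y: "\<forall>i<m. 0 \<le> lform (Suc D) (homog_coeffs D (P i)) y" and neg: "y D < 0"
    and x: "x1 \<in> proj_polyhedron m D P {} X" "x2 \<in> proj_polyhedron m D P {} X"
  shows "x1 = x2"
proof -
  let ?z = "\<lambda>j. y j / y D"
  have z: "aff D (P i) ?z \<le> 0" if "i < m" for i
    using y neg that by (auto simp: lform_homog_coeffs_dehomog zero_le_mult_iff)
  have "x = (\<chi> k. aff D (X k) ?z)" if mem: "x \<in> proj_polyhedron m D P {} X" for x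
  proof -
    obtain y0 where y0: "\<forall>i<m. 0 \<le> aff D (P i) y0" and x: "\<forall>k. x$k = aff D (X k) y0"
      using mem unfolding proj_polyhedron_def by blast
    have "\<forall>i<m. 0 \<le> lform D (fst (P i)) (\<lambda>j. y0 j - ?z j)"
      using y0 z unfolding lform_diff aff_def by (smt (verit))
    then have "lform D (fst (X k)) (\<lambda>j. y0 j - ?z j) = 0" for k
      by (rule lform_recession_direction_zero[OF bounded y0])
    then show ?thesis
      using x by (simp add: lform_diff aff_def vec_eq_iff)
  qed
  then show ?thesis
    using x by metis
qed

text \<open>The converse needs boundedness, which excludes recession directions, and a second point,
  which excludes a negative last coordinate.\<close>
lemma cone_sol_homog_coeffs_subset:
  assumes bounded: "proj_polyhedron m D P {} X \<subseteq> unit_cube"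
    and q: "q1 \<in> proj_polyhedron m D P {} X" "q2 \<in> proj_polyhedron m D P {} X" "q1 \<noteq> q2"
  shows "cone_map (Suc D) (\<lambda>k. homog_coeffs D (X k)) (homog_coeffs D (\<lambda>j. 0, 1))
      ` cone_sol m (Suc D) (\<lambda>i. homog_coeffs D (P i)) {} \<subseteq> homogenization (proj_polyhedron m D P {} X)"
proof
  fix p assume "p \<in> cone_map (Suc D) (\<lambda>k. homog_coeffs D (X k)) (homog_coeffs D (\<lambda>j. 0, 1))
      ` cone_sol m (Suc D) (\<lambda>i. homog_coeffs D (P i)) {}"
  then obtain y where y: "\<forall>i<m. 0 \<le> lform (Suc D) (homog_coeffs D (P i)) y"
    and p: "p = cone_map (Suc D) (\<lambda>k. homog_coeffs D (X k)) (homog_coeffs D (\<lambda>j. 0, 1)) y"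
    unfolding cone_sol_def by blast
  consider "0 < y D" | "y D = 0" | "y D < 0" by linarith
  then show "p \<in> homogenization (proj_polyhedron m D P {} X)"
  proof cases
    case 1
    let ?z = "\<lambda>j. y j / y D"
    have "\<forall>i<m. 0 \<le> aff D (P i) ?z"
      using y 1 by (simp add: lform_homog_coeffs_dehomog zero_le_mult_iff)
    then have "(\<chi> k. aff D (X k) ?z) \<in> proj_polyhedron m D P {} X"
      by (simp add: mem_proj_polyhedronI)
    moreover have "p = (y D *\<^sub>R (\<chi> k. aff D (X k) ?z), y D)"
      using 1 unfolding p cone_map_def
      by (simp add: lform_homog_coeffs_dehomog aff_def lform_zero_coeffs vec_eq_iff)
    ultimately show ?thesis
      using 1 by (simp add: scaled_mem_homogenization)
  next
    case 2
    obtain y1 where y1: "\<forall>i<m. 0 \<le> aff D (P i) y1"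
      using q(1) unfolding proj_polyhedron_def by auto
    have "lform D (fst (X k)) y = 0" for k
      using y 2 by (intro lform_recession_direction_zero[OF bounded y1]) (simp add: lform_homog_coeffs)
    then have "p = 0"
      using 2 unfolding p cone_map_def
      by (simp add: lform_homog_coeffs lform_zero_coeffs zero_prod_def vec_eq_iff)
    then show ?thesis
      by (simp add: zero_mem_homogenization)
  next
    case 3
    then show ?thesis
      using bounded_proj_polyhedron_subsingleton[OF bounded y 3 q(1,2)] q(3) by simp
  qed
qed

lemma cone_form_homogenization:
  assumes "ext_form Q \<sigma>" and "Q \<subseteq> unit_cube" and "q1 \<in> Q" "q2 \<in> Q" "q1 \<noteq> q2"
  shows "cone_form (homogenization Q) \<sigma>"
proof -
  obtain D P X where Q: "Q = proj_polyhedron \<sigma> D P {} X"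
    using assms(1) unfolding ext_form_iff_proj_polyhedron by blast
  have "homogenization Q = cone_map (Suc D) (\<lambda>k. homog_coeffs D (X k))
      (homog_coeffs D (\<lambda>j. 0, 1)) ` cone_sol \<sigma> (Suc D) (\<lambda>i. homog_coeffs D (P i)) {}"
    unfolding Q using homogenization_proj_polyhedron_subset
      cone_sol_homog_coeffs_subset[OF assms(2-5)[unfolded Q]] by (rule equalityI)
  then show ?thesis
    by (rule cone_formI[OF finite.emptyI])
qed

lemma cone_form_homogenization_rf_apply:
  fixes Q :: "(real^'n::finite) set"
  assumes "convex Q" and "cone_form (homogenization Q) \<sigma>"
  shows "cone_form (homogenization (rf_apply \<psi> Q)) (rf_size \<psi> * \<sigma>)"
proof (induction \<psi>)
  case (Var i)
  then show ?case
    using cone_form_Int_coord_eq[OF assms(2), of i 1] by (simp add: homogenization_coord_eq)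
next
  case (NegVar i)
  then show ?case
    using cone_form_Int_coord_eq[OF assms(2), of i 0] by (simp add: homogenization_coord_eq)
next
  case (Conj f g)
  then show ?case
    using cone_form_Int[OF Conj.IH] by (simp add: homogenization_Int add_mult_distrib)
next
  case (Disj f g)
  have "convex (rf_apply f Q)" "convex (rf_apply g Q)"
    using convex_rf_apply[OF assms(1)] by auto
  then show ?case
    using cone_form_plus[OF Disj.IH] by (simp add: homogenization_convex_hull_Un add_mult_distrib)
qed

lemma rf_size_ge_1: "1 \<le> rf_size \<psi>"
  by (induction \<psi>) auto

lemma ext_form_empty: "1 \<le> m \<Longrightarrow> ext_form {} m"
  using proj_polyhedron_infeasible[of m 0 "{}" "\<lambda>k. (\<lambda>j. 0, 0)"]
  unfolding ext_form_iff_proj_polyhedron by metis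

lemma ext_form_singleton: "ext_form {q} m"
proof -
  have "{q} = proj_polyhedron m 0 (\<lambda>i. (\<lambda>j. 0, 0)) {} (\<lambda>k. (\<lambda>j. 0, q$k))"
    unfolding proj_polyhedron_def aff_def lform_def by (auto simp: vec_eq_iff)
  then show ?thesis
    unfolding ext_form_iff_proj_polyhedron by blast
qed

text \<open>The homogenization argument needs two points of Q; otherwise \<phi>(Q) has at most one point.\<close>
lemma ext_form_rf_apply:
  fixes Q :: "(real^'n::finite) set"
  assumes "convex Q" and "Q \<subseteq> unit_cube" and "ext_form Q \<sigma>" and "1 \<le> \<sigma>"
  shows "ext_form (rf_apply \<phi> Q) (rf_size \<phi> * \<sigma>)"
proof -
  have m: "1 \<le> rf_size \<phi> * \<sigma>"
    using rf_size_ge_1[of \<phi>] assms(4) by simp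
  show ?thesis
  proof (cases "\<exists>q1\<in>Q. \<exists>q2\<in>Q. q1 \<noteq> q2")
    case True
    then have "cone_form (homogenization Q) \<sigma>"
      using cone_form_homogenization[OF assms(3,2)] by blast
    then have "cone_form (homogenization (rf_apply \<phi> Q)) (rf_size \<phi> * \<sigma>)"
      by (rule cone_form_homogenization_rf_apply[OF assms(1)])
    from ext_form_cone_slice[OF this m] show ?thesis
      unfolding homogenization_slice .
  next
    case False
    then have "rf_apply \<phi> Q = {} \<or> (\<exists>q. rf_apply \<phi> Q = {q})"
      using rf_apply_subset[OF assms(1), of \<phi>] by blast
    then show ?thesis
      using ext_form_empty[OF m] ext_form_singleton by auto
  qed
qed

theorem theorem4p4:
  fixes \<phi> :: "'n::finite rformula" and Q :: "(real^'n) set" and \<nu> \<sigma> :: nat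
  assumes "convex Q" and "Q \<subseteq> unit_cube" and "defined_set \<phi> \<subseteq> Q"
  shows "(sat_valid_notch (defined_set \<phi>) \<nu> Q
            \<longrightarrow> sat_valid_notch (defined_set \<phi>) (\<nu> + 1) (rf_apply \<phi> Q))
       \<and> (polytope Q \<and> ext_form Q \<sigma> \<and> 1 \<le> \<sigma>
            \<longrightarrow> polytope (rf_apply \<phi> Q) \<and> ext_form (rf_apply \<phi> Q) (rf_size \<phi> * \<sigma>))"
  using sat_valid_notch_rf_apply[OF assms(1,2)] polytope_rf_apply ext_form_rf_apply[OF assms(1,2)]
  by blast

end
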